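(* Let $G$ be a nonempty oriented Burling graph. Then $G$ has a full in-star cutset, or $G$ is an oriented chandelier, or $G$ contains a vertex of degree at most $1$.
   Context: Graphs are finite, without loops or multiple edges; oriented graphs have no pair of opposite arcs; words such as degree, neighbor, connected, when applied to an oriented graph, refer to its underlying graph. In a rooted tree $T$ with root $r$, each non-root vertex $v$ has a parent $p(v)$; children, leaves, ancestors and descendants are as usual (every vertex is an ancestor and a descendant of itself). A branch is a sequence $v_1 v_2\dots v_k$ ($k\ge 0$) of vertices such that $v_i$ is the parent of $v_{i+1}$ for all $i<k$; it starts at $v_1$. A Burling tree is a 4-tuple $(T,r,\ell,c)$ where $T$ is a rooted tree with root $r$; $\ell$ assigns to each non-leaf vertex $v$ one of its children $\ell(v)$, called the last-born of $v$; and $c$ assigns to every vertex $v$ that is neither the root nor a last-born the vertex-set of a (possibly empty) branch of $T$ starting at $\ell(p(v))$, while $c(v)=\emptyset$ if $v$ is the root or a last-born. The oriented graph fully derived from $(T,r,\ell,c)$ has vertex-set $V(T)$ and an arc $uv$ if and only if $v\in c(u)$. An oriented graph is derived from a Burling tree if it is an induced subgraph of the oriented graph fully derived from it; an oriented Burling graph is an oriented graph derived from some Burling tree. For a vertex $v$, $N^-(v)$ is its set of in-neighbors and $N^-[v]=N^-(v)\cup\{v\}$. A full in-star cutset of an oriented graph $G$ is a set $N^-[v]$, for some $v\in V(G)$, such that $G\setminus N^-[v]$ is disconnected. An in-tree is an oriented graph obtained from a rooted tree by orienting every edge towards the root; a leaf of an in-tree is a source with exactly one out-neighbor. An oriented chandelier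 is an oriented graph obtained from an in-tree $G'$ with at least two leaves by adding a new vertex $v$ and all arcs $uv$ where $u$ is a leaf of $G'$. *)

theory Defs
  imports Main
begin

definition oriented_graph :: "'a set \<Rightarrow> ('a \<times> 'a) set \<Rightarrow> bool" where
  "oriented_graph V A \<longleftrightarrow> finite V \<and> A \<subseteq> V \<times> V \<and> (\<forall>x. (x, x) \<notin> A)
     \<and> (\<forall>x y. (x, y) \<in> A \<longrightarrow> (y, x) \<notin> A)"

(* Rooted tree on vertex set VT with root r, given by a parent function par
   (par is only meaningful on non-root vertices): every non-root vertex has its
   parent in VT and every vertex reaches the root by iterating par. *)
definition rooted_tree :: "'a set \<Rightarrow> 'a \<Rightarrow> ('a \<Rightarrow> 'a) \<Rightarrow> bool" where
  "rooted_tree VT r par \<longleftrightarrow> finite VT \<and> r \<in> VT \<and> (\<forall>v \<in> VT - {r}. par v \<in> VT)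
     \<and> (\<forall>v \<in> VT. \<exists>n. (par ^^ n) v = r)"

definition children :: "'a set \<Rightarrow> 'a \<Rightarrow> ('a \<Rightarrow> 'a) \<Rightarrow> 'a \<Rightarrow> 'a set" where
  "children VT r par v = {u \<in> VT - {r}. par u = v}"

definition is_branch :: "'a set \<Rightarrow> 'a \<Rightarrow> ('a \<Rightarrow> 'a) \<Rightarrow> 'a list \<Rightarrow> bool" where
  "is_branch VT r par xs \<longleftrightarrow> set xs \<subseteq> VT \<and>
     (\<forall>i. Suc i < length xs \<longrightarrow> xs ! Suc i \<noteq> r \<and> par (xs ! Suc i) = xs ! i)"

(* Burling tree (T, r, l, c): lb = last-born function, c = the function c *)
definition burling_tree :: "'a set \<Rightarrow> 'a \<Rightarrow> ('a \<Rightarrow> 'a) \<Rightarrow> ('a \<Rightarrow> 'a) \<Rightarrow> ('a \<Rightarrow> 'a set) \<Rightarrow> bool" where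
  "burling_tree VT r par lb c \<longleftrightarrow> rooted_tree VT r par
     \<and> (\<forall>v \<in> VT. children VT r par v \<noteq> {} \<longrightarrow> lb v \<in> children VT r par v)
     \<and> c r = {}
     \<and> (\<forall>v \<in> VT - {r}. v = lb (par v) \<longrightarrow> c v = {})
     \<and> (\<forall>v \<in> VT - {r}. v \<noteq> lb (par v) \<longrightarrow>
          (\<exists>xs. is_branch VT r par xs \<and> (xs = [] \<or> hd xs = lb (par v)) \<and> c v = set xs))"

(* G = (V, A) is an oriented graph isomorphic to an induced subgraph of the oriented
   graph fully derived from a Burling tree (tree vertices taken to be naturals,
   which is no loss since trees are finite). *)
definition oriented_burling_graph :: "'a set \<Rightarrow> ('a \<times> 'a) set \<Rightarrow> bool" where
  "oriented_burling_graph V A \<longleftrightarrow> oriented_graph V A \<and>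
     (\<exists>(VT :: nat set) r par lb c f. burling_tree VT r par lb c \<and> inj_on f V \<and> f ` V \<subseteq> VT
        \<and> (\<forall>u \<in> V. \<forall>w \<in> V. (u, w) \<in> A \<longleftrightarrow> f w \<in> c (f u)))"

definition in_nbrs :: "('a \<times> 'a) set \<Rightarrow> 'a \<Rightarrow> 'a set" where
  "in_nbrs A v = {u. (u, v) \<in> A}"

definition adj_on :: "'a set \<Rightarrow> ('a \<times> 'a) set \<Rightarrow> ('a \<times> 'a) set" where
  "adj_on W A = {(x, y). x \<in> W \<and> y \<in> W \<and> ((x, y) \<in> A \<or> (y, x) \<in> A)}"

definition disconnected_on :: "'a set \<Rightarrow> ('a \<times> 'a) set \<Rightarrow> bool" where
  "disconnected_on W A \<longleftrightarrow> (\<exists>x \<in> W. \<exists>y \<in> W. (x, y) \<notin> (adj_on W A)\<^sup>*)"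

definition has_full_in_star_cutset :: "'a set \<Rightarrow> ('a \<times> 'a) set \<Rightarrow> bool" where
  "has_full_in_star_cutset V A \<longleftrightarrow> (\<exists>v \<in> V. disconnected_on (V - insert v (in_nbrs A v)) A)"

definition degree :: "'a set \<Rightarrow> ('a \<times> 'a) set \<Rightarrow> 'a \<Rightarrow> nat" where
  "degree V A v = card {u \<in> V. (u, v) \<in> A \<or> (v, u) \<in> A}"

definition in_tree :: "'a set \<Rightarrow> ('a \<times> 'a) set \<Rightarrow> bool" where
  "in_tree V A \<longleftrightarrow> (\<exists>\<rho> par. rooted_tree V \<rho> par \<and> A = {(x, par x) | x. x \<in> V - {\<rho>}})"

definition in_tree_leaves :: "'a set \<Rightarrow> ('a \<times> 'a) set \<Rightarrow> 'a set" where
  "in_tree_leaves V A = {u \<in> V. (\<forall>x. (x, u) \<notin> A) \<and> card {w. (u, w) \<in> A} = 1}"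

definition oriented_chandelier :: "'a set \<Rightarrow> ('a \<times> 'a) set \<Rightarrow> bool" where
  "oriented_chandelier V A \<longleftrightarrow> (\<exists>v \<in> V.
     let V' = V - {v}; A' = A \<inter> (V' \<times> V') in
       in_tree V' A' \<and> 2 \<le> card (in_tree_leaves V' A')
       \<and> A = A' \<union> {(u, v) | u. u \<in> in_tree_leaves V' A'})"

end

theory Submission
  imports Defs
begin

text \<open>Embed \<open>G\<close> into its Burling tree. An arc \<open>uw\<close> means that \<open>w\<close> lies on a branch starting at
  the last-born sibling of \<open>u\<close>; hence arcs never decrease the depth, the ends of an arc are
  incomparable in the tree order, an arc between vertices of equal depth ends in a sink, the
  out-neighbours of a vertex form a chain, and \<open>G\<close> is acyclic.

  If no vertex of \<open>G\<close> lies below another one, a vertex of minimum depth, or an in-neighbour of it,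
  is a source whose out-neighbours form a chain and hence coincide: its degree is at most 1.

  Otherwise some \<open>d\<close> lies strictly below some \<open>x\<close>. If \<open>N\<^sup>-[x]\<close> is not a cutset, every vertex is
  below \<open>x\<close> or an in-neighbour of \<open>x\<close>. Then \<open>x\<close> is a sink, its proper descendants form an
  antichain closed under out-arcs, the in-neighbours of \<open>x\<close> are sources, and every vertex has at
  most one out-neighbour other than \<open>x\<close>. If moreover all degrees are at least 2, \<open>G - x\<close> is a
  connected acyclic digraph of out-degree at most one, i.e. an in-tree, and its leaves are exactly
  the in-neighbours of \<open>x\<close>: \<open>G\<close> is an oriented chandelier.\<close>

section \<open>Connectivity, in-forests and chandeliers\<close>

lemma degree_le_1I:
  assumes "finite V"
    and "\<And>a b. a \<in> V \<Longrightarrow> b \<in> V \<Longrightarrow> (a, v) \<in> A \<or> (v, a) \<in> A \<Longrightarrow> (b, v) \<in> A \<or> (v, b) \<in> A \<Longrightarrow> a = b"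
  shows "degree V A v \<le> 1"
proof -
  have "card {u \<in> V. (u, v) \<in> A \<or> (v, u) \<in> A} \<le> Suc 0"
    using assms by (subst card_le_Suc0_iff_eq) auto
  then show ?thesis
    by (simp add: degree_def)
qed

lemma rtrancl_adj_on_sym:
  assumes "(a, b) \<in> (adj_on W A)\<^sup>*"
  shows "(b, a) \<in> (adj_on W A)\<^sup>*"
proof -
  have "sym (adj_on W A)"
    by (auto simp: sym_def adj_on_def)
  then show ?thesis
    using assms sym_rtrancl by (blast dest: symD)
qed

lemma rtrancl_adj_on_mono:
  "W \<subseteq> U \<Longrightarrow> (a, b) \<in> (adj_on W A)\<^sup>* \<Longrightarrow> (a, b) \<in> (adj_on U A)\<^sup>*"
  by (rule rtrancl_mono[THEN subsetD, rotated]) (auto simp: adj_on_def)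

lemma rtrancl_adj_on_if_attached:
  assumes "W \<subseteq> U"
    and W_connected: "\<And>a b. a \<in> W \<Longrightarrow> b \<in> W \<Longrightarrow> (a, b) \<in> (adj_on W A)\<^sup>*"
    and attached: "\<And>u. u \<in> U \<Longrightarrow> \<exists>w \<in> W. (u, w) \<in> (adj_on U A)\<^sup>*"
    and "a \<in> U" "b \<in> U"
  shows "(a, b) \<in> (adj_on U A)\<^sup>*"
proof -
  obtain wa wb where "wa \<in> W" "wb \<in> W" and "(a, wa) \<in> (adj_on U A)\<^sup>*" "(b, wb) \<in> (adj_on U A)\<^sup>*"
    using attached \<open>a \<in> U\<close> \<open>b \<in> U\<close> by blast
  moreover have "(wa, wb) \<in> (adj_on U A)\<^sup>*"
    using W_connected[OF \<open>wa \<in> W\<close> \<open>wb \<in> W\<close>] rtrancl_adj_on_mono[OF \<open>W \<subseteq> U\<close>] by blast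
  ultimately show ?thesis
    by (meson rtrancl_adj_on_sym rtrancl_trans)
qed

locale in_forest =
  fixes V :: "'a set" and A :: "('a \<times> 'a) set"
  assumes finite_V: "finite V" and arcs_in: "A \<subseteq> V \<times> V" and acyclic: "acyclic A"
    and functional: "\<And>y w w'. (y, w) \<in> A \<Longrightarrow> (y, w') \<in> A \<Longrightarrow> w = w'"
begin

definition sink :: "'a \<Rightarrow> bool" where
  "sink y \<longleftrightarrow> (\<forall>w. (y, w) \<notin> A)"

definition parent :: "'a \<Rightarrow> 'a" where
  "parent y = (if sink y then y else THE w. (y, w) \<in> A)"

lemma parent_eq: "(y, w) \<in> A \<Longrightarrow> parent y = w"
  unfolding parent_def sink_def using functional by auto

lemma parent_sink: "sink y \<Longrightarrow> parent y = y"
  by (simp add: parent_def)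

lemma arc_parent: "\<not> sink y \<Longrightarrow> (y, parent y) \<in> A"
  using parent_eq by (auto simp: sink_def)

lemma parent_in: "y \<in> V \<Longrightarrow> parent y \<in> V"
  using arc_parent parent_sink arcs_in by (cases "sink y") auto

lemma funpow_parent_in: "y \<in> V \<Longrightarrow> (parent ^^ n) y \<in> V"
  by (induction n) (simp_all add: parent_in)

lemma funpow_parent_sink: "sink y \<Longrightarrow> (parent ^^ n) y = y"
  by (induction n) (simp_all add: parent_sink)

lemma reaches_sink: "\<exists>n. sink ((parent ^^ n) y)"
proof -
  have "wf (A\<inverse>)"
    using finite_acyclic_wf_converse finite_subset[OF arcs_in] finite_V acyclic by blast
  then show ?thesis
  proof (induction y rule: wf_induct_rule)
    case (less y)
    show ?case
    proof (cases "sink y")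
      case True
      then have "sink ((parent ^^ 0) y)"
        by simp
      then show ?thesis ..
    next
      case False
      then obtain n where "sink ((parent ^^ n) (parent y))"
        using less arc_parent by blast
      then have "sink ((parent ^^ Suc n) y)"
        by (simp add: funpow_swap1)
      then show ?thesis ..
    qed
  qed
qed

lemma walk_reaches_sink:
  assumes "sink s" "(s, z) \<in> (adj_on V A)\<^sup>*"
  shows "\<exists>n. (parent ^^ n) z = s"
  using assms(2)
proof (induction rule: rtrancl_induct)
  case base
  have "(parent ^^ 0) s = s"
    by simp
  then show ?case ..
next
  case (step z z')
  then obtain n where n: "(parent ^^ n) z = s"
    by blast
  from step(2) consider "(z, z') \<in> A" | "(z', z) \<in> A"
    by (auto simp: adj_on_def)
  then show ?case
  proof cases
    case 1
    then have "z \<noteq> s"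
      using \<open>sink s\<close> by (auto simp: sink_def)
    then obtain m where "n = Suc m"
      using n by (cases n) auto
    then have "(parent ^^ m) z' = s"
      using n parent_eq[OF 1] by (simp add: funpow_swap1)
    then show ?thesis
      by blast
  next
    case 2
    then have "(parent ^^ Suc n) z' = s"
      using n parent_eq[OF 2] by (simp add: funpow_swap1)
    then show ?thesis
      by blast
  qed
qed

lemma in_tree_if_connected:
  assumes "V \<noteq> {}" and connected: "\<And>a b. a \<in> V \<Longrightarrow> b \<in> V \<Longrightarrow> (a, b) \<in> (adj_on V A)\<^sup>*"
  shows "in_tree V A"
proof -
  obtain y0 where "y0 \<in> V"
    using assms(1) by blast
  then obtain \<rho> where "\<rho> \<in> V" "sink \<rho>"
    using reaches_sink funpow_parent_in by blast
  have reaches_\<rho>: "\<exists>n. (parent ^^ n) y = \<rho>" if "y \<in> V" for y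
    using walk_reaches_sink[OF \<open>sink \<rho>\<close> connected[OF \<open>\<rho> \<in> V\<close> that]] .
  have sink_iff: "sink y \<longleftrightarrow> y = \<rho>" if "y \<in> V" for y
  proof
    assume "sink y"
    then show "y = \<rho>"
      using reaches_\<rho>[OF that] funpow_parent_sink by metis
  qed (use \<open>sink \<rho>\<close> in simp)
  have "rooted_tree V \<rho> parent"
    unfolding rooted_tree_def using finite_V \<open>\<rho> \<in> V\<close> parent_in reaches_\<rho> by blast
  moreover have "A = {(y, parent y) | y. y \<in> V - {\<rho>}}"
  proof (intro equalityI subsetI)
    fix p assume "p \<in> A"
    then obtain y w where "p = (y, w)" "(y, w) \<in> A" "y \<in> V"
      using arcs_in by auto
    then show "p \<in> {(y, parent y) | y. y \<in> V - {\<rho>}}"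
      using sink_iff parent_eq by (auto simp: sink_def)
  next
    fix p assume "p \<in> {(y, parent y) | y. y \<in> V - {\<rho>}}"
    then show "p \<in> A"
      using sink_iff arc_parent by auto
  qed
  ultimately show ?thesis
    unfolding in_tree_def by blast
qed

end

lemma oriented_chandelierI:
  assumes "x \<in> V" "A \<subseteq> V \<times> V" "\<And>w. (x, w) \<notin> A"
    and "in_tree (V - {x}) (Restr A (V - {x}))"
    and "in_tree_leaves (V - {x}) (Restr A (V - {x})) = in_nbrs A x"
    and "2 \<le> card (in_nbrs A x)"
  shows "oriented_chandelier V A"
  unfolding oriented_chandelier_def Let_def
proof (intro bexI[of _ x] conjI)
  show "A = Restr A (V - {x})
      \<union> {(u, x) | u. u \<in> in_tree_leaves (V - {x}) (Restr A (V - {x}))}"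
    using assms(2,3,5) by (auto simp: in_nbrs_def)
qed (use assms in auto)

section \<open>Rooted trees\<close>

locale rooted =
  fixes VT :: "'v set" and r :: 'v and par :: "'v \<Rightarrow> 'v"
  assumes rooted_tree: "rooted_tree VT r par"
begin

lemma par_in: "v \<in> VT \<Longrightarrow> v \<noteq> r \<Longrightarrow> par v \<in> VT"
  using rooted_tree by (simp add: rooted_tree_def)

lemma reaches_root: "v \<in> VT \<Longrightarrow> \<exists>n. (par ^^ n) v = r"
  using rooted_tree by (simp add: rooted_tree_def)

definition depth :: "'v \<Rightarrow> nat" where
  "depth v = (LEAST n. (par ^^ n) v = r)"

lemma depth_root: "depth r = 0"
  unfolding depth_def by (rule Least_eq_0) simp

lemma funpow_depth: "v \<in> VT \<Longrightarrow> (par ^^ depth v) v = r"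
  unfolding depth_def by (rule LeastI_ex) (rule reaches_root)

lemma depth_le: "(par ^^ n) v = r \<Longrightarrow> depth v \<le> n"
  unfolding depth_def by (rule Least_le)

lemma depth_par:
  assumes "v \<in> VT" "v \<noteq> r"
  shows "depth v = Suc (depth (par v))"
proof (rule antisym)
  have "(par ^^ Suc (depth (par v))) v = r"
    using funpow_depth[OF par_in[OF assms]] by (simp add: funpow_swap1)
  then show "depth v \<le> Suc (depth (par v))"
    by (rule depth_le)
  obtain m where m: "depth v = Suc m"
    using funpow_depth[OF assms(1)] assms(2) by (cases "depth v") auto
  then have "(par ^^ m) (par v) = r"
    using funpow_depth[OF assms(1)] by (simp add: funpow_swap1)
  then show "Suc (depth (par v)) \<le> depth v"
    using m depth_le by simp
qed

lemma depth_child: "u \<in> children VT r par p \<Longrightarrow> depth u = Suc (depth p)"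
  using depth_par by (auto simp: children_def)

lemma funpow_par_in:
  assumes "w \<in> VT" "n \<le> depth w"
  shows "(par ^^ n) w \<in> VT \<and> depth ((par ^^ n) w) = depth w - n"
  using assms(2)
proof (induction n)
  case (Suc n)
  then have IH: "(par ^^ n) w \<in> VT" "depth ((par ^^ n) w) = depth w - n"
    by auto
  moreover have "(par ^^ n) w \<noteq> r"
    using IH(2) Suc.prems depth_root by auto
  ultimately show ?case
    using depth_par par_in by simp
qed (use assms(1) in simp)

text \<open>The bound \<open>n \<le> depth w\<close> keeps the iteration from passing the root, where \<open>par\<close> is unspecified.\<close>

definition ancestor :: "'v \<Rightarrow> 'v \<Rightarrow> bool" where
  "ancestor a w \<longleftrightarrow> w \<in> VT \<and> (\<exists>n \<le> depth w. (par ^^ n) w = a)"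

lemma ancestor_refl: "w \<in> VT \<Longrightarrow> ancestor w w"
  unfolding ancestor_def by force

lemma ancestorE:
  assumes "ancestor a w"
  obtains "a \<in> VT" "w \<in> VT" "depth a \<le> depth w" "a = (par ^^ (depth w - depth a)) w"
proof -
  obtain n where n: "w \<in> VT" "n \<le> depth w" "(par ^^ n) w = a"
    using assms unfolding ancestor_def by blast
  then have "a \<in> VT" "depth a = depth w - n"
    using funpow_par_in[OF n(1,2)] by auto
  then show thesis
    using that n by simp
qed

lemma ancestor_depth: "ancestor a w \<Longrightarrow> depth a \<le> depth w"
  by (erule ancestorE)

lemma ancestor_depth_eq: "ancestor a w \<Longrightarrow> depth a = depth w \<Longrightarrow> a = w"
  by (erule ancestorE) simp

lemma ancestor_antisym: "ancestor a b \<Longrightarrow> ancestor b a \<Longrightarrow> a = b"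
  using ancestor_depth ancestor_depth_eq by (meson le_antisym)

lemma ancestor_of_ancestors:
  assumes "ancestor a w" "ancestor b w" "depth a \<le> depth b"
  shows "ancestor a b"
proof -
  obtain "b \<in> VT" "depth b \<le> depth w" "b = (par ^^ (depth w - depth b)) w"
    using assms(2) by (rule ancestorE)
  moreover obtain "a = (par ^^ (depth w - depth a)) w"
    using assms(1) by (rule ancestorE)
  moreover have "depth w - depth a = (depth b - depth a) + (depth w - depth b)"
    using assms(3) \<open>depth b \<le> depth w\<close> by simp
  ultimately have "a = (par ^^ (depth b - depth a)) b"
    by (metis funpow_add comp_apply)
  then show ?thesis
    unfolding ancestor_def using \<open>b \<in> VT\<close> by (metis diff_le_self)
qed

lemma ancestors_comparable: "ancestor a w \<Longrightarrow> ancestor b w \<Longrightarrow> ancestor a b \<or> ancestor b a"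
  using ancestor_of_ancestors nat_le_linear by blast

lemma ancestor_trans:
  assumes "ancestor a b" "ancestor b w"
  shows "ancestor a w"
proof -
  obtain m where m: "w \<in> VT" "m \<le> depth w" "(par ^^ m) w = b"
    using assms(2) unfolding ancestor_def by blast
  obtain k where k: "k \<le> depth b" "(par ^^ k) b = a"
    using assms(1) unfolding ancestor_def by blast
  have "depth b = depth w - m"
    using funpow_par_in m by blast
  then have "k + m \<le> depth w" "(par ^^ (k + m)) w = a"
    using k m by (auto simp: funpow_add)
  then show ?thesis
    unfolding ancestor_def using m(1) by blast
qed

lemma ancestor_par: "w \<in> VT \<Longrightarrow> w \<noteq> r \<Longrightarrow> ancestor (par w) w"
  unfolding ancestor_def using depth_par by (intro conjI exI[of _ 1]) auto

lemma ancestor_par_if_proper: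
  assumes "ancestor a w" "a \<noteq> w"
  shows "w \<noteq> r" "ancestor a (par w)"
proof -
  obtain "w \<in> VT" "depth a < depth w"
    using assms ancestorE ancestor_depth_eq by (metis le_neq_implies_less)
  then show "w \<noteq> r"
    using depth_root by auto
  then show "ancestor a (par w)"
    using ancestor_of_ancestors[OF assms(1) ancestor_par] depth_par \<open>w \<in> VT\<close> \<open>depth a < depth w\<close>
    by simp
qed

lemma children_disjoint:
  assumes "s \<in> children VT r par p" "u \<in> children VT r par p" "s \<noteq> u"
    and "ancestor s w" "ancestor u w"
  shows False
proof -
  have "depth s = depth u"
    using assms(1,2) depth_child by simp
  then show False
    using ancestors_comparable[OF assms(4,5)] ancestor_depth_eq assms(3) by metis
qed

lemma branch_ancestor:
  assumes "is_branch VT r par xs" "j \<le> i" "i < length xs"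
  shows "ancestor (xs ! j) (xs ! i) \<and> depth (xs ! i) = depth (xs ! j) + (i - j)"
  using assms(2,3)
proof (induction i)
  case 0
  then show ?case
    using assms(1) by (auto simp: is_branch_def intro!: ancestor_refl)
next
  case (Suc i)
  have in_VT: "xs ! Suc i \<in> VT" and "xs ! Suc i \<noteq> r" and par_eq: "par (xs ! Suc i) = xs ! i"
    using assms(1) Suc.prems by (auto simp: is_branch_def)
  show ?case
  proof (cases "j = Suc i")
    case True
    then show ?thesis
      using in_VT ancestor_refl by simp
  next
    case False
    then have IH: "ancestor (xs ! j) (xs ! i)" "depth (xs ! i) = depth (xs ! j) + (i - j)"
      using Suc by auto
    have "ancestor (xs ! i) (xs ! Suc i)" "depth (xs ! Suc i) = Suc (depth (xs ! i))"
      using ancestor_par[OF in_VT] depth_par[OF in_VT] \<open>xs ! Suc i \<noteq> r\<close> par_eq by auto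
    then show ?thesis
      using IH ancestor_trans False Suc.prems by (auto simp: Suc_diff_le)
  qed
qed

lemma set_branch:
  assumes "is_branch VT r par xs" "xs \<noteq> []"
  shows "set xs = {y. ancestor (hd xs) y \<and> ancestor y (last xs)}"
proof -
  have hd: "hd xs = xs ! 0" and last: "last xs = xs ! (length xs - 1)"
    using assms(2) by (simp_all add: hd_conv_nth last_conv_nth)
  have "ancestor (hd xs) y \<and> ancestor y (last xs)" if y: "y \<in> set xs" for y
  proof -
    obtain i where "i < length xs" "y = xs ! i"
      using y by (auto simp: in_set_conv_nth)
    then show ?thesis
      using branch_ancestor[OF assms(1), of 0 i] branch_ancestor[OF assms(1), of i "length xs - 1"]
      by (simp add: hd last)
  qed
  moreover have "y \<in> set xs" if y: "ancestor (hd xs) y" "ancestor y (last xs)" for y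
  proof -
    define k where "k = depth y - depth (hd xs)"
    have "depth (last xs) = depth (hd xs) + (length xs - 1)"
      using branch_ancestor[OF assms(1), of 0 "length xs - 1"] assms(2) by (simp add: hd last)
    then have "k < length xs"
      using ancestor_depth[OF y(2)] assms(2) unfolding k_def by (cases xs) auto
    then have "ancestor (xs ! k) (last xs)" "depth (xs ! k) = depth y"
      using branch_ancestor[OF assms(1), of k "length xs - 1"] branch_ancestor[OF assms(1), of 0 k]
        ancestor_depth[OF y(1)]
      by (auto simp: hd last k_def)
    then have "xs ! k = y"
      using ancestors_comparable[OF _ y(2)] ancestor_depth_eq by metis
    then show ?thesis
      using \<open>k < length xs\<close> nth_mem by blast
  qed
  ultimately show ?thesis
    by blast
qed

end

section \<open>Burling trees\<close>

locale burling =
  fixes VT :: "'v set" and r :: 'v and par lb :: "'v \<Rightarrow> 'v" and c :: "'v \<Rightarrow> 'v set"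
  assumes burling_tree: "burling_tree VT r par lb c"

sublocale burling \<subseteq> rooted
  using burling_tree by unfold_locales (simp add: burling_tree_def)

context burling
begin

lemma last_born_child: "v \<in> VT \<Longrightarrow> children VT r par v \<noteq> {} \<Longrightarrow> lb v \<in> children VT r par v"
  using burling_tree by (simp add: burling_tree_def)

lemma c_root: "c r = {}"
  using burling_tree by (simp add: burling_tree_def)

lemma c_last_born: "v \<in> VT - {r} \<Longrightarrow> v = lb (par v) \<Longrightarrow> c v = {}"
  using burling_tree by (simp add: burling_tree_def)

lemma c_branch:
  "v \<in> VT - {r} \<Longrightarrow> v \<noteq> lb (par v) \<Longrightarrow>
    \<exists>xs. is_branch VT r par xs \<and> (xs = [] \<or> hd xs = lb (par v)) \<and> c v = set xs"
  using burling_tree by (simp add: burling_tree_def)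

lemma c_nonempty_interval:
  assumes "u \<in> VT" "c u \<noteq> {}"
  obtains t where "u \<in> children VT r par (par u)" "lb (par u) \<in> children VT r par (par u)"
    "lb (par u) \<noteq> u" "c u = {y. ancestor (lb (par u)) y \<and> ancestor y t}"
proof -
  have "u \<noteq> r"
    using assms c_root by auto
  then have u_child: "u \<in> children VT r par (par u)"
    using assms(1) by (simp add: children_def)
  have "lb (par u) \<noteq> u"
    using assms \<open>u \<noteq> r\<close> c_last_born by auto
  have lb_child: "lb (par u) \<in> children VT r par (par u)"
    using last_born_child par_in[OF assms(1) \<open>u \<noteq> r\<close>] u_child by blast
  obtain xs where "is_branch VT r par xs" "xs = [] \<or> hd xs = lb (par u)" "c u = set xs"
    using c_branch[of u] assms(1) \<open>u \<noteq> r\<close> \<open>lb (par u) \<noteq> u\<close> by auto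
  moreover have "xs \<noteq> []"
    using \<open>c u = set xs\<close> assms(2) by auto
  ultimately have "c u = {y. ancestor (lb (par u)) y \<and> ancestor y (last xs)}"
    using set_branch by auto
  then show thesis
    using that u_child lb_child \<open>lb (par u) \<noteq> u\<close> by blast
qed

lemma c_depth_ge:
  assumes "u \<in> VT" "w \<in> c u"
  shows "depth u \<le> depth w"
proof -
  obtain t where "u \<in> children VT r par (par u)" "lb (par u) \<in> children VT r par (par u)"
    and "c u = {y. ancestor (lb (par u)) y \<and> ancestor y t}"
    using c_nonempty_interval assms by blast
  then have "depth (lb (par u)) = depth u" "ancestor (lb (par u)) w"
    using assms(2) depth_child by auto
  then show ?thesis
    using ancestor_depth by metis
qed

lemma c_same_depth_empty:
  assumes "u \<in> VT" "w \<in> c u" "depth w = depth u"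
  shows "c w = {}"
proof -
  obtain t where "u \<in> children VT r par (par u)" and lb: "lb (par u) \<in> children VT r par (par u)"
    and "c u = {y. ancestor (lb (par u)) y \<and> ancestor y t}"
    using c_nonempty_interval assms by blast
  then have "ancestor (lb (par u)) w" "depth (lb (par u)) = depth w"
    using assms(2,3) depth_child by auto
  then have "w = lb (par u)"
    by (rule ancestor_depth_eq[symmetric])
  then have "w \<in> VT - {r}" "w = lb (par w)"
    using lb by (auto simp: children_def)
  then show ?thesis
    by (rule c_last_born)
qed

text \<open>The extra 1 for sinks makes the rank increase also along arcs between vertices of equal
  depth, whose heads are sinks.\<close>

lemma wf_fully_derived: "wf {(u, w). u \<in> VT \<and> w \<in> c u}"
proof (rule wf_subset)
  define rank where "rank v = 2 * depth v + (if c v = {} then 1 else 0)" for v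
  show "wf (inv_image less_than rank)"
    by simp
  show "{(u, w). u \<in> VT \<and> w \<in> c u} \<subseteq> inv_image less_than rank"
  proof clarify
    fix u w assume "u \<in> VT" "w \<in> c u"
    then have "rank u = 2 * depth u" "depth u \<le> depth w"
      using c_depth_ge by (auto simp: rank_def)
    moreover have "depth w = depth u \<Longrightarrow> rank w = 2 * depth u + 1"
      using c_same_depth_empty \<open>u \<in> VT\<close> \<open>w \<in> c u\<close> by (simp add: rank_def)
    moreover have "2 * depth w \<le> rank w"
      by (simp add: rank_def)
    ultimately show "(u, w) \<in> inv_image less_than rank"
      by (cases "depth w = depth u") auto
  qed
qed

lemma c_incomparable:
  assumes "u \<in> VT" "w \<in> c u"
  shows "\<not> ancestor u w" "\<not> ancestor w u"
proof -
  obtain t where "u \<in> children VT r par (par u)" "lb (par u) \<in> children VT r par (par u)"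
    "lb (par u) \<noteq> u" and "c u = {y. ancestor (lb (par u)) y \<and> ancestor y t}"
    using c_nonempty_interval assms by blast
  then show not_below: "\<not> ancestor u w"
    using children_disjoint assms(2) by blast
  show "\<not> ancestor w u"
  proof
    assume "ancestor w u"
    then have "w = u"
      using c_depth_ge[OF assms] ancestor_depth ancestor_depth_eq le_antisym by blast
    then show False
      using not_below ancestor_refl[OF assms(1)] by simp
  qed
qed

lemma c_below_proper_ancestor:
  assumes "u \<in> VT" "w \<in> c u" "ancestor a u" "a \<noteq> u"
  shows "ancestor a w"
proof -
  define s where "s = lb (par u)"
  obtain t where s_child: "s \<in> children VT r par (par u)"
    and "c u = {y. ancestor s y \<and> ancestor y t}"
    using c_nonempty_interval assms unfolding s_def by blast
  then have "ancestor s w" "ancestor (par u) s"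
    using assms(2) ancestor_par[of s] by (auto simp: children_def)
  moreover have "ancestor a (par u)"
    using ancestor_par_if_proper assms(3,4) by blast
  ultimately show ?thesis
    using ancestor_trans by blast
qed

lemma c_chain:
  assumes "u \<in> VT" "w \<in> c u" "w' \<in> c u"
  shows "ancestor w w' \<or> ancestor w' w"
proof -
  obtain t where "c u = {y. ancestor (lb (par u)) y \<and> ancestor y t}"
    using c_nonempty_interval assms by blast
  then show ?thesis
    using assms(2,3) ancestors_comparable by blast
qed

lemma c_ancestor_closed:
  assumes "u \<in> VT" "z \<in> c u" "ancestor a z" "\<not> ancestor a u"
  shows "a \<in> c u"
proof -
  define s where "s = lb (par u)"
  obtain t where u_child: "u \<in> children VT r par (par u)" and s_child: "s \<in> children VT r par (par u)"
    and c_eq: "c u = {y. ancestor s y \<and> ancestor y t}"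
    using c_nonempty_interval assms unfolding s_def by blast
  have "ancestor s z" "ancestor z t"
    using assms(2) c_eq by auto
  have "ancestor s a"
  proof (rule ccontr)
    assume "\<not> ancestor s a"
    then have "ancestor a s" "a \<noteq> s"
      using ancestors_comparable[OF \<open>ancestor s z\<close> assms(3)] by auto
    moreover have "par s = par u"
      using s_child by (simp add: children_def)
    ultimately have "ancestor a (par u)"
      using ancestor_par_if_proper(2) by metis
    then have "ancestor a u"
      using ancestor_trans ancestor_par u_child by (auto simp: children_def)
    then show False
      using assms(4) by blast
  qed
  then show ?thesis
    using c_eq assms(3) \<open>ancestor z t\<close> ancestor_trans by blast
qed

end

section \<open>Graphs derived from a Burling tree\<close>

locale derived_graph = burling VT r par lb c
  for VT :: "'v set" and r par lb c +
  fixes V :: "'a set" and A :: "('a \<times> 'a) set" and f :: "'a \<Rightarrow> 'v"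
  assumes oriented: "oriented_graph V A" and inj: "inj_on f V" and f_in: "f ` V \<subseteq> VT"
    and arc_iff: "\<And>u w. u \<in> V \<Longrightarrow> w \<in> V \<Longrightarrow> (u, w) \<in> A \<longleftrightarrow> f w \<in> c (f u)"
begin

lemma finite_V: "finite V"
  using oriented by (simp add: oriented_graph_def)

lemma arcs_in: "A \<subseteq> V \<times> V"
  using oriented by (simp add: oriented_graph_def)

lemma arc_asym: "(u, w) \<in> A \<Longrightarrow> (w, u) \<notin> A"
  using oriented by (simp add: oriented_graph_def)

lemma f_in_VT: "u \<in> V \<Longrightarrow> f u \<in> VT"
  using f_in by blast

lemma arc_c:
  assumes "(u, w) \<in> A"
  shows "f u \<in> VT" "f w \<in> c (f u)"
proof -
  have "u \<in> V" "w \<in> V"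
    using assms arcs_in by auto
  then show "f u \<in> VT" "f w \<in> c (f u)"
    using assms arc_iff[OF \<open>u \<in> V\<close> \<open>w \<in> V\<close>] f_in_VT by simp_all
qed

lemma arc_depth_le: "(u, w) \<in> A \<Longrightarrow> depth (f u) \<le> depth (f w)"
  using arc_c by (rule c_depth_ge)

lemma arc_incomparable:
  assumes "(u, w) \<in> A"
  shows "\<not> ancestor (f u) (f w)" "\<not> ancestor (f w) (f u)"
  using c_incomparable[OF arc_c[OF assms]] by simp_all

lemma arc_same_depth_sink:
  assumes "(u, w) \<in> A" "depth (f w) = depth (f u)"
  shows "(w, z) \<notin> A"
proof
  assume "(w, z) \<in> A"
  then have "f z \<in> c (f w)"
    by (rule arc_c)
  then show False
    using c_same_depth_empty[OF arc_c[OF assms(1)] assms(2)] by simp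
qed

lemma out_nbrs_comparable:
  assumes "(u, w) \<in> A" "(u, w') \<in> A"
  shows "ancestor (f w) (f w') \<or> ancestor (f w') (f w)"
  using c_chain[OF arc_c(1)[OF assms(1)] arc_c(2)[OF assms(1)] arc_c(2)[OF assms(2)]] .

lemma acyclic_arcs: "acyclic A"
proof -
  have "A \<subseteq> inv_image {(u, w). u \<in> VT \<and> w \<in> c u} f"
    using arc_c by (auto simp: inv_image_def)
  then have "wf A"
    using wf_subset[OF wf_inv_image[OF wf_fully_derived]] by blast
  then show ?thesis
    by (rule wf_acyclic)
qed

lemma degree_le_1_if_antichain:
  assumes "V \<noteq> {}"
    and antichain: "\<And>u w. u \<in> V \<Longrightarrow> w \<in> V \<Longrightarrow> ancestor (f u) (f w) \<Longrightarrow> w = u"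
  shows "\<exists>v \<in> V. degree V A v \<le> 1"
proof -
  have source_degree: "degree V A u \<le> 1" if source: "\<And>z. (z, u) \<notin> A" for u
  proof (rule degree_le_1I[OF finite_V])
    fix a b assume "(a, u) \<in> A \<or> (u, a) \<in> A" "(b, u) \<in> A \<or> (u, b) \<in> A"
    then have "(u, a) \<in> A" "(u, b) \<in> A"
      using source by auto
    then show "a = b"
      using out_nbrs_comparable antichain arcs_in by blast
  qed
  obtain y0 where "y0 \<in> V"
    using assms(1) by blast
  then obtain y where "y \<in> V" and y_min: "\<And>z. z \<in> V \<Longrightarrow> depth (f y) \<le> depth (f z)"
    using ex_has_least_nat[of "\<lambda>z. z \<in> V" y0 "\<lambda>z. depth (f z)"] by blast
  show ?thesis
  proof (cases "\<exists>w. (w, y) \<in> A")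
    case False
    then show ?thesis
      using source_degree \<open>y \<in> V\<close> by blast
  next
    case True
    then obtain w where "(w, y) \<in> A"
      by blast
    txt \<open>By minimality of \<open>y\<close>, an arc \<open>zw\<close> would join vertices of equal depth, making \<open>w\<close> a sink.\<close>
    have "(z, w) \<notin> A" for z
    proof
      assume "(z, w) \<in> A"
      then have "z \<in> V"
        using arcs_in by blast
      have "depth (f z) \<le> depth (f w)" "depth (f w) \<le> depth (f y)"
        using arc_depth_le \<open>(z, w) \<in> A\<close> \<open>(w, y) \<in> A\<close> by blast+
      then have "depth (f w) = depth (f z)"
        using y_min[OF \<open>z \<in> V\<close>] by linarith
      then show False
        using arc_same_depth_sink \<open>(z, w) \<in> A\<close> \<open>(w, y) \<in> A\<close> by blast
    qed
    then show ?thesis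
      using source_degree \<open>(w, y) \<in> A\<close> arcs_in by blast
  qed
qed

text \<open>An arc leaving a proper descendant of \<open>x\<close> ends below \<open>x\<close>, and an arc entering the subtree
  of \<open>x\<close> from outside would come from an in-neighbour of \<open>x\<close>.\<close>

lemma ancestor_along_star_complement_walk:
  assumes "x \<in> V" "(d, y) \<in> (adj_on (V - insert x (in_nbrs A x)) A)\<^sup>*" "ancestor (f x) (f d)"
  shows "ancestor (f x) (f y)"
  using assms(2)
proof (induction rule: rtrancl_induct)
  case base
  show ?case
    using assms(3) .
next
  case (step z z')
  then have "z \<in> V" "z' \<in> V" "z \<noteq> x" "(z', x) \<notin> A" and arc: "(z, z') \<in> A \<or> (z', z) \<in> A"
    by (auto simp: adj_on_def in_nbrs_def)
  then have "f x \<noteq> f z"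
    using inj \<open>x \<in> V\<close> by (metis inj_on_eq_iff)
  from arc show ?case
  proof
    assume "(z, z') \<in> A"
    then show ?thesis
      using c_below_proper_ancestor arc_c step.IH \<open>f x \<noteq> f z\<close> by blast
  next
    assume "(z', z) \<in> A"
    show ?thesis
    proof (rule ccontr)
      assume "\<not> ancestor (f x) (f z')"
      then have "f x \<in> c (f z')"
        using c_ancestor_closed arc_c[OF \<open>(z', z) \<in> A\<close>] step.IH by blast
      then show False
        using arc_iff[OF \<open>z' \<in> V\<close> \<open>x \<in> V\<close>] \<open>(z', x) \<notin> A\<close> by simp
    qed
  qed
qed

lemma below_or_in_nbr_if_no_cutset:
  assumes no_cutset: "\<not> has_full_in_star_cutset V A"
    and "x \<in> V" "d \<in> V" "d \<noteq> x" "ancestor (f x) (f d)" "y \<in> V"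
  shows "ancestor (f x) (f y) \<or> (y, x) \<in> A"
proof (rule ccontr)
  assume y_out: "\<not> (ancestor (f x) (f y) \<or> (y, x) \<in> A)"
  define W where "W = V - insert x (in_nbrs A x)"
  have "(d, x) \<notin> A"
    using arc_incomparable(2) \<open>ancestor (f x) (f d)\<close> by blast
  then have "d \<in> W"
    using assms(3,4) by (simp add: W_def in_nbrs_def)
  have "y \<noteq> x"
    using y_out ancestor_refl f_in_VT \<open>x \<in> V\<close> by blast
  then have "y \<in> W"
    using y_out \<open>y \<in> V\<close> by (simp add: W_def in_nbrs_def)
  have "(d, y) \<in> (adj_on W A)\<^sup>*"
    using no_cutset \<open>x \<in> V\<close> \<open>d \<in> W\<close> \<open>y \<in> W\<close>
    unfolding has_full_in_star_cutset_def disconnected_on_def W_def by blast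
  then show False
    using ancestor_along_star_complement_walk \<open>x \<in> V\<close> \<open>ancestor (f x) (f d)\<close> y_out
    unfolding W_def by blast
qed

end

section \<open>The chandelier case\<close>

locale cutset_free_nested = derived_graph VT r par lb c V A f
  for VT :: "'v set" and r par lb c and V :: "'a set" and A f +
  fixes x d :: 'a
  assumes no_cutset: "\<not> has_full_in_star_cutset V A"
    and x_in: "x \<in> V" and d_in: "d \<in> V" and d_ne_x: "d \<noteq> x"
    and x_above_d: "ancestor (f x) (f d)"
begin

definition proper_descendants :: "'a set" where
  "proper_descendants = {z \<in> V. z \<noteq> x \<and> ancestor (f x) (f z)}"

lemma below_or_in_nbr: "y \<in> V \<Longrightarrow> ancestor (f x) (f y) \<or> (y, x) \<in> A"
  using below_or_in_nbr_if_no_cutset[OF no_cutset x_in d_in d_ne_x x_above_d] .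

lemma x_sink: "(x, w) \<notin> A"
proof
  assume "(x, w) \<in> A"
  moreover have "w \<in> V"
    using \<open>(x, w) \<in> A\<close> arcs_in by blast
  ultimately show False
    using below_or_in_nbr arc_incomparable(1) arc_asym by blast
qed

lemma star_complement_eq_proper_descendants: "V - insert x (in_nbrs A x) = proper_descendants"
proof (intro equalityI subsetI)
  fix z assume z: "z \<in> V - insert x (in_nbrs A x)"
  then have "ancestor (f x) (f z)"
    using below_or_in_nbr[of z] by (simp add: in_nbrs_def)
  with z show "z \<in> proper_descendants"
    by (simp add: proper_descendants_def)
next
  fix z assume z: "z \<in> proper_descendants"
  then have "(z, x) \<notin> A"
    using arc_incomparable(2)[of z x] by (auto simp: proper_descendants_def)
  with z show "z \<in> V - insert x (in_nbrs A x)"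
    by (simp add: proper_descendants_def in_nbrs_def)
qed

lemma proper_descendants_connected:
  assumes "a \<in> proper_descendants" "b \<in> proper_descendants"
  shows "(a, b) \<in> (adj_on proper_descendants A)\<^sup>*"
proof -
  have "\<not> disconnected_on proper_descendants A"
    using no_cutset x_in star_complement_eq_proper_descendants by (auto simp: has_full_in_star_cutset_def)
  then show ?thesis
    using assms by (simp add: disconnected_on_def)
qed

lemma proper_descendants_antichain:
  assumes "u \<in> proper_descendants" "w \<in> proper_descendants" "ancestor (f u) (f w)"
  shows "w = u"
proof (rule ccontr)
  assume "w \<noteq> u"
  have "u \<in> V" "w \<in> V" "u \<noteq> x" "ancestor (f x) (f u)"
    using assms(1,2) by (auto simp: proper_descendants_def)
  with below_or_in_nbr_if_no_cutset[OF no_cutset \<open>u \<in> V\<close> \<open>w \<in> V\<close> \<open>w \<noteq> u\<close> assms(3) x_in]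
  consider "ancestor (f u) (f x)" | "(x, u) \<in> A"
    by blast
  then show False
  proof cases
    case 1
    then have "f u = f x"
      using ancestor_antisym \<open>ancestor (f x) (f u)\<close> by blast
    then show False
      using inj \<open>u \<in> V\<close> x_in \<open>u \<noteq> x\<close> by (metis inj_on_eq_iff)
  next
    case 2
    then show False
      using x_sink by blast
  qed
qed

lemma proper_descendants_out_closed:
  assumes "u \<in> proper_descendants" "(u, w) \<in> A"
  shows "w \<in> proper_descendants"
proof -
  have "u \<in> V" "u \<noteq> x" "ancestor (f x) (f u)"
    using assms(1) by (auto simp: proper_descendants_def)
  then have "f x \<noteq> f u"
    using inj x_in by (metis inj_on_eq_iff)
  then have "ancestor (f x) (f w)"
    using c_below_proper_ancestor arc_c[OF assms(2)] \<open>ancestor (f x) (f u)\<close> by blast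
  moreover have "w \<noteq> x"
    using arc_incomparable(2)[of u x] assms(2) \<open>ancestor (f x) (f u)\<close> by blast
  moreover have "w \<in> V"
    using assms(2) arcs_in by blast
  ultimately show ?thesis
    by (simp add: proper_descendants_def)
qed

lemma in_nbrs_independent:
  assumes "(z, x) \<in> A" "(z', x) \<in> A"
  shows "(z, z') \<notin> A"
proof
  assume "(z, z') \<in> A"
  then show False
    using out_nbrs_comparable[OF _ assms(1)] arc_incomparable[OF assms(2)] by blast
qed

lemma in_nbr_source:
  assumes "(z, x) \<in> A"
  shows "(y, z) \<notin> A"
proof
  assume "(y, z) \<in> A"
  then have "y \<in> V" "y \<noteq> x"
    using arcs_in x_sink by auto
  show False
  proof (cases "(y, x) \<in> A")
    case True
    then show False
      using in_nbrs_independent assms \<open>(y, z) \<in> A\<close> by blast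
  next
    case False
    then have "y \<in> proper_descendants"
      using star_complement_eq_proper_descendants \<open>y \<in> V\<close> \<open>y \<noteq> x\<close> by (auto simp: in_nbrs_def)
    then have "z \<in> proper_descendants"
      using proper_descendants_out_closed \<open>(y, z) \<in> A\<close> by blast
    then show False
      using star_complement_eq_proper_descendants assms by (auto simp: in_nbrs_def)
  qed
qed

lemma arc_into_proper_descendants:
  assumes "(y, w) \<in> A" "w \<noteq> x"
  shows "w \<in> proper_descendants"
proof (cases "(y, x) \<in> A")
  case True
  then have "(w, x) \<notin> A"
    using in_nbr_source assms(1) by blast
  then show ?thesis
    using star_complement_eq_proper_descendants assms arcs_in by (auto simp: in_nbrs_def)
next
  case False
  moreover have "y \<in> V" "y \<noteq> x"
    using assms(1) arcs_in x_sink by auto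
  ultimately have "y \<in> proper_descendants"
    using star_complement_eq_proper_descendants by (auto simp: in_nbrs_def)
  then show ?thesis
    using proper_descendants_out_closed assms(1) by blast
qed

lemma out_arc_unique:
  assumes "(y, w) \<in> A" "(y, w') \<in> A" "w \<noteq> x" "w' \<noteq> x"
  shows "w = w'"
  using out_nbrs_comparable[OF assms(1,2)] proper_descendants_antichain arc_into_proper_descendants assms by metis

context
  assumes min_degree: "\<And>v. v \<in> V \<Longrightarrow> 2 \<le> degree V A v"
begin

lemma in_nbr_out_arc:
  assumes "(z, x) \<in> A"
  shows "\<exists>w. (z, w) \<in> A \<and> w \<noteq> x"
proof (rule ccontr)
  assume "\<nexists>w. (z, w) \<in> A \<and> w \<noteq> x"
  then have "degree V A z \<le> 1"
    using in_nbr_source[OF assms] by (intro degree_le_1I[OF finite_V]) blast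
  moreover have "z \<in> V"
    using assms arcs_in by blast
  ultimately show False
    using min_degree by fastforce
qed

lemma two_le_card_in_nbrs: "2 \<le> card (in_nbrs A x)"
proof -
  have "{u \<in> V. (u, x) \<in> A \<or> (x, u) \<in> A} = in_nbrs A x"
    using x_sink arcs_in by (auto simp: in_nbrs_def)
  then show ?thesis
    using min_degree[OF x_in] by (simp add: degree_def)
qed

lemma connected_minus_x:
  assumes "a \<in> V - {x}" "b \<in> V - {x}"
  shows "(a, b) \<in> (adj_on (V - {x}) A)\<^sup>*"
proof (rule rtrancl_adj_on_if_attached[OF _ proper_descendants_connected _ assms])
  show "proper_descendants \<subseteq> V - {x}"
    by (auto simp: proper_descendants_def)
  fix u assume u: "u \<in> V - {x}"
  show "\<exists>w \<in> proper_descendants. (u, w) \<in> (adj_on (V - {x}) A)\<^sup>*"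
  proof (cases "u \<in> proper_descendants")
    case False
    then have "(u, x) \<in> A"
      using star_complement_eq_proper_descendants u by (auto simp: in_nbrs_def)
    then obtain w where "(u, w) \<in> A" "w \<noteq> x"
      using in_nbr_out_arc by blast
    then have "w \<in> proper_descendants" "(u, w) \<in> adj_on (V - {x}) A"
      using arc_into_proper_descendants u arcs_in by (auto simp: adj_on_def)
    then show ?thesis
      by blast
  qed blast
qed

lemma in_tree_minus_x: "in_tree (V - {x}) (Restr A (V - {x}))"
proof -
  interpret in_forest "V - {x}" "Restr A (V - {x})"
  proof
    show "finite (V - {x})"
      using finite_V by simp
    show "acyclic (Restr A (V - {x}))"
      using acyclic_arcs acyclic_subset by blast
  qed (use out_arc_unique in auto)
  have "adj_on (V - {x}) (Restr A (V - {x})) = adj_on (V - {x}) A"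
    by (auto simp: adj_on_def)
  then show ?thesis
    using in_tree_if_connected connected_minus_x d_in d_ne_x by auto
qed

lemma leaf_minus_x_is_in_nbr:
  assumes "u \<in> in_tree_leaves (V - {x}) (Restr A (V - {x}))"
  shows "(u, x) \<in> A"
proof (rule ccontr)
  assume "(u, x) \<notin> A"
  have u: "u \<in> V - {x}" and no_in: "\<And>z. (z, u) \<notin> Restr A (V - {x})"
    and one_out: "card {w. (u, w) \<in> Restr A (V - {x})} = 1"
    using assms by (auto simp: in_tree_leaves_def)
  obtain w0 where w0: "{w. (u, w) \<in> Restr A (V - {x})} = {w0}"
    using card_1_singletonE[OF one_out] by blast
  have "z = w0" if "z \<in> V" "(z, u) \<in> A \<or> (u, z) \<in> A" for z
  proof -
    have "z \<noteq> x"
      using that(2) x_sink \<open>(u, x) \<notin> A\<close> by auto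
    then show ?thesis
      using that u no_in w0 by blast
  qed
  then have "degree V A u \<le> 1"
    by (intro degree_le_1I[OF finite_V]) blast
  then show False
    using min_degree u by fastforce
qed

lemma in_nbr_is_leaf_minus_x:
  assumes "(u, x) \<in> A"
  shows "u \<in> in_tree_leaves (V - {x}) (Restr A (V - {x}))"
proof -
  obtain w0 where "(u, w0) \<in> A" "w0 \<noteq> x"
    using in_nbr_out_arc assms by blast
  have u: "u \<in> V - {x}"
    using assms arcs_in x_sink by auto
  have "{w. (u, w) \<in> Restr A (V - {x})} = {w0}"
    using out_arc_unique \<open>(u, w0) \<in> A\<close> \<open>w0 \<noteq> x\<close> u arcs_in by auto
  moreover have "(z, u) \<notin> A" for z
    using in_nbr_source assms by blast
  ultimately show ?thesis
    using u by (simp add: in_tree_leaves_def)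
qed

lemma leaves_minus_x: "in_tree_leaves (V - {x}) (Restr A (V - {x})) = in_nbrs A x"
  using leaf_minus_x_is_in_nbr in_nbr_is_leaf_minus_x by (auto simp: in_nbrs_def)

lemma oriented_chandelier: "oriented_chandelier V A"
  using oriented_chandelierI[OF x_in arcs_in x_sink in_tree_minus_x leaves_minus_x
      two_le_card_in_nbrs] .

end

end

theorem theorem5p5:
  fixes V :: "'a set" and A :: "('a \<times> 'a) set"
  assumes "oriented_burling_graph V A" and "V \<noteq> {}"
  shows "has_full_in_star_cutset V A \<or> oriented_chandelier V A \<or> (\<exists>v \<in> V. degree V A v \<le> 1)"
proof -
  obtain VT :: "nat set" and r par lb c f where "oriented_graph V A"
    "burling_tree VT r par lb c" "inj_on f V" "f ` V \<subseteq> VT"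
    "\<forall>u \<in> V. \<forall>w \<in> V. (u, w) \<in> A \<longleftrightarrow> f w \<in> c (f u)"
    using assms(1) unfolding oriented_burling_graph_def by (elim conjE exE) (rule that)
  then have derived: "derived_graph VT r par lb c V A f"
    by (simp add: derived_graph_def derived_graph_axioms_def burling_def)
  then interpret derived_graph VT r par lb c V A f .
  consider (nested) x d where "x \<in> V" "d \<in> V" "d \<noteq> x" "ancestor (f x) (f d)"
    | (antichain) "\<And>u w. u \<in> V \<Longrightarrow> w \<in> V \<Longrightarrow> ancestor (f u) (f w) \<Longrightarrow> w = u"
    by blast
  then show ?thesis
  proof cases
    case (nested x d)
    show ?thesis
    proof (cases "has_full_in_star_cutset V A \<or> (\<exists>v \<in> V. degree V A v \<le> 1)")
      case False
      then have "cutset_free_nested VT r par lb c V A f x d"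
        using derived nested by (simp add: cutset_free_nested_def cutset_free_nested_axioms_def)
      moreover have "\<And>v. v \<in> V \<Longrightarrow> 2 \<le> degree V A v"
        using False by force
      ultimately have "oriented_chandelier V A"
        by (rule cutset_free_nested.oriented_chandelier)
      then show ?thesis
        by blast
    qed blast
  next
    case antichain
    then show ?thesis
      using degree_le_1_if_antichain assms(2) by blast
  qed
qed

end
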